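(* Let $V$ be a finite-dimensional real inner product space with an orthogonal basis $e_1,\dots,e_M$ of nonzero vectors. Let $\beta\in V$ be nonzero and suppose there exist a positive integer $L$, functions $l_1\le l_2:\{1,\dots,L\}\to\mathbb Z$ and a partition $\{\Delta_{h,m}:(h,m)\in J\}$ of $\{1,\dots,M\}$ into nonempty sets, $J=\{(h,m):1\le h\le L,\ l_1(h)\le m\le l_2(h)\}$, such that with $r_{h,m}=\sum_{j\in\Delta_{h,m}}\|e_j\|^{-2}$ and $\epsilon(h)=(\sum_m m\,r_{h,m})/(\sum_m r_{h,m})$ (sums over $l_1(h)\le m\le l_2(h)$) we have $-1/2\le\epsilon(h)<1/2$, $\epsilon(1)>\cdots>\epsilon(L)$, and $\beta/\|\beta\|^2=\sum_{h=1}^L\sum_{m=l_1(h)}^{l_2(h)}\sum_{j\in\Delta_{h,m}}(\epsilon(h)-m)e_j/\|e_j\|^2$. Let $i\in\Delta_{h,m}$ and $j\in\Delta_{h',m'}$. Then $\beta\cdot(e_i-e_j)=\|\beta\|^2$ if and only if $h'=h$ and $m'=m+1$; and $\beta\cdot(e_i-e_j)\ge\|\beta\|^2$ if and only if either $m'\ge m+2$, or $m'=m+1$ and $h'\ge h$. *)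

theory Defs
  imports "HOL-Analysis.Analysis"
begin

definition rr :: "(nat \<Rightarrow> 'a::real_inner) \<Rightarrow> (nat \<Rightarrow> int \<Rightarrow> nat set) \<Rightarrow> nat \<Rightarrow> int \<Rightarrow> real" where
  "rr e \<Delta> h m = (\<Sum>j\<in>\<Delta> h m. 1 / (norm (e j))\<^sup>2)"

definition eps :: "(nat \<Rightarrow> 'a::real_inner) \<Rightarrow> (nat \<Rightarrow> int \<Rightarrow> nat set) \<Rightarrow> (nat \<Rightarrow> int) \<Rightarrow> (nat \<Rightarrow> int) \<Rightarrow> nat \<Rightarrow> real" where
  "eps e \<Delta> l1 l2 h =
     (\<Sum>m=l1 h..l2 h. of_int m * rr e \<Delta> h m) / (\<Sum>m=l1 h..l2 h. rr e \<Delta> h m)"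

definition Jset :: "nat \<Rightarrow> (nat \<Rightarrow> int) \<Rightarrow> (nat \<Rightarrow> int) \<Rightarrow> (nat \<times> int) set" where
  "Jset L l1 l2 = {(h, m). 1 \<le> h \<and> h \<le> L \<and> l1 h \<le> m \<and> m \<le> l2 h}"

end

theory Submission
  imports Defs
begin

text \<open>Since the \<open>e\<^sub>j\<close> are orthogonal, pairing the expansion of \<open>\<beta> / \<parallel>\<beta>\<parallel>\<^sup>2\<close> with \<open>e\<^sub>k\<close>
  isolates a single coefficient: \<open>\<beta> \<bullet> e\<^sub>k = \<parallel>\<beta>\<parallel>\<^sup>2 (\<epsilon>(h) - m)\<close> for \<open>k \<in> \<Delta>\<^sub>h\<^sub>,\<^sub>m\<close>. Hence
  \<open>\<beta> \<bullet> (e\<^sub>i - e\<^sub>j) / \<parallel>\<beta>\<parallel>\<^sup>2 = \<epsilon>(h) - \<epsilon>(h') + (m' - m)\<close>, and since \<open>\<epsilon>\<close> takes values in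
  \<open>[-1/2, 1/2)\<close> and is strictly decreasing, comparing this number with 1 is a matter
  of integer parts: the integer \<open>m' - m\<close> must be 1 or at least 2, and in the first case
  the sign of \<open>\<epsilon>(h) - \<epsilon>(h')\<close> decides.\<close>

lemma inner_block_sum_orthogonal:
  fixes e :: "'i \<Rightarrow> 'a::real_inner" and A :: "'p \<Rightarrow> 'i set" and c :: "'p \<Rightarrow> real"
  assumes "finite P" and "\<And>p. p \<in> P \<Longrightarrow> finite (A p)" and "disjoint_family_on A P"
    and orth: "\<And>j. j \<in> (\<Union>p\<in>P. A p) \<Longrightarrow> j \<noteq> k \<Longrightarrow> inner (e j) (e k) = 0"
    and "e k \<noteq> 0" and "p\<^sub>0 \<in> P" and "k \<in> A p\<^sub>0"
  shows "inner (\<Sum>p\<in>P. \<Sum>j\<in>A p. (c p / (norm (e j))\<^sup>2) *\<^sub>R e j) (e k) = c p\<^sub>0"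
proof -
  have summand: "inner ((c p / (norm (e j))\<^sup>2) *\<^sub>R e j) (e k) = (if j = k then c p else 0)"
    if "p \<in> P" "j \<in> A p" for p j
    using orth[of j] that \<open>e k \<noteq> 0\<close> by (auto simp: power2_norm_eq_inner)
  have block: "k \<in> A p \<longleftrightarrow> p = p\<^sub>0" if "p \<in> P" for p
    using assms(3,6,7) that by (auto simp: disjoint_family_on_def)
  have "inner (\<Sum>p\<in>P. \<Sum>j\<in>A p. (c p / (norm (e j))\<^sup>2) *\<^sub>R e j) (e k)
      = (\<Sum>p\<in>P. \<Sum>j\<in>A p. if j = k then c p else 0)"
    unfolding inner_sum_left by (intro sum.cong refl summand)
  also have "\<dots> = (\<Sum>p\<in>P. if p = p\<^sub>0 then c p else 0)"
    using assms(2) block by (intro sum.cong) auto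
  also have "\<dots> = c p\<^sub>0"
    using assms(1,6) by simp
  finally show ?thesis .
qed

lemma Jset_eq_Sigma: "Jset L l1 l2 = Sigma {1..L} (\<lambda>h. {l1 h..l2 h})"
  by (auto simp: Jset_def)

lemma sum_Jset:
  "(\<Sum>p\<in>Jset L l1 l2. f (fst p) (snd p)) = (\<Sum>h=1..L. \<Sum>m=l1 h..l2 h. f h m)"
  by (simp add: Jset_eq_Sigma sum.Sigma split_def)

lemma inner_basis_vector_eq_block_coeff:
  fixes e :: "nat \<Rightarrow> 'a::real_inner" and \<beta> :: 'a and c :: "nat \<Rightarrow> int \<Rightarrow> real"
  assumes e_nz: "\<forall>k\<in>{1..M}. e k \<noteq> 0"
    and e_orth: "\<forall>k\<in>{1..M}. \<forall>k'\<in>{1..M}. k \<noteq> k' \<longrightarrow> inner (e k) (e k') = 0"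
    and part_disj: "\<forall>p\<in>Jset L l1 l2. \<forall>q\<in>Jset L l1 l2. p \<noteq> q \<longrightarrow>
                      \<Delta> (fst p) (snd p) \<inter> \<Delta> (fst q) (snd q) = {}"
    and part_cover: "(\<Union>p\<in>Jset L l1 l2. \<Delta> (fst p) (snd p)) = {1..M}"
    and "\<beta> \<noteq> 0"
    and expansion: "(1 / (norm \<beta>)\<^sup>2) *\<^sub>R \<beta> =
       (\<Sum>h=1..L. \<Sum>m=l1 h..l2 h. \<Sum>j\<in>\<Delta> h m. (c h m / (norm (e j))\<^sup>2) *\<^sub>R e j)"
    and hm: "(h, m) \<in> Jset L l1 l2" and k: "k \<in> \<Delta> h m"
  shows "inner \<beta> (e k) = (norm \<beta>)\<^sup>2 * c h m"
proof -
  define B where "B p = \<Delta> (fst p) (snd p)" for p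
  have blocks: "\<Union> (B ` Jset L l1 l2) = {1..M}"
    using part_cover by (simp add: B_def)
  have regrouped: "(1 / (norm \<beta>)\<^sup>2) *\<^sub>R \<beta>
      = (\<Sum>p\<in>Jset L l1 l2. \<Sum>j\<in>B p. (c (fst p) (snd p) / (norm (e j))\<^sup>2) *\<^sub>R e j)"
    unfolding expansion B_def by (rule sum_Jset[symmetric])
  have "inner (\<Sum>p\<in>Jset L l1 l2. \<Sum>j\<in>B p. (c (fst p) (snd p) / (norm (e j))\<^sup>2) *\<^sub>R e j) (e k)
      = c (fst (h, m)) (snd (h, m))"
  proof (rule inner_block_sum_orthogonal)
    show "finite (Jset L l1 l2)"
      by (simp add: Jset_eq_Sigma)
    show "finite (B p)" if "p \<in> Jset L l1 l2" for p
      using that blocks by (metis UN_upper finite_atLeastAtMost finite_subset)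
    show "disjoint_family_on B (Jset L l1 l2)"
      using part_disj by (auto simp: disjoint_family_on_def B_def)
    have "k \<in> {1..M}"
      using hm k blocks unfolding B_def by (metis UN_upper fst_conv snd_conv subsetD)
    then show "e k \<noteq> 0"
      using e_nz by blast
    show "inner (e j) (e k) = 0" if "j \<in> \<Union> (B ` Jset L l1 l2)" "j \<noteq> k" for j
      using e_orth that \<open>k \<in> {1..M}\<close> blocks by blast
    show "(h, m) \<in> Jset L l1 l2" "k \<in> B (h, m)"
      using hm k by (simp_all add: B_def)
  qed
  then have "inner ((1 / (norm \<beta>)\<^sup>2) *\<^sub>R \<beta>) (e k) = c h m"
    by (simp add: regrouped)
  with \<open>\<beta> \<noteq> 0\<close> show ?thesis
    by (simp add: field_simps)
qed

lemma half_interval_shift_eq_one_iff: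
  fixes x y :: real and d :: int
  assumes "x \<in> {-1/2..<1/2}" and "y \<in> {-1/2..<1/2}"
  shows "x - y + of_int d = 1 \<longleftrightarrow> d = 1 \<and> x = y"
proof
  assume sum_eq: "x - y + of_int d = 1"
  with assms have "(0::real) < of_int d" and "of_int d < (2::real)"
    by auto
  then have "d = 1"
    by linarith
  with sum_eq show "d = 1 \<and> x = y"
    by simp
qed simp

lemma half_interval_shift_ge_one_iff:
  fixes x y :: real and d :: int
  assumes "x \<in> {-1/2..<1/2}" and "y \<in> {-1/2..<1/2}"
  shows "x - y + of_int d \<ge> 1 \<longleftrightarrow> d \<ge> 2 \<or> (d = 1 \<and> x \<ge> y)"
proof
  assume sum_ge: "x - y + of_int d \<ge> 1"
  with assms have "(0::real) < of_int d"
    by auto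
  then have "0 < d"
    by simp
  then consider "d \<ge> 2" | "d = 1"
    by linarith
  then show "d \<ge> 2 \<or> (d = 1 \<and> x \<ge> y)"
    by cases (use sum_ge in auto)
next
  assume "d \<ge> 2 \<or> (d = 1 \<and> x \<ge> y)"
  then consider "(2::real) \<le> of_int d" | "d = 1" "x \<ge> y"
    by (auto simp del: of_int_le_iff)
  then show "x - y + of_int d \<ge> 1"
  proof cases
    case 1
    with assms show ?thesis
      by simp
  qed simp
qed

lemma strict_antimono_on_le_iff:
  fixes f :: "'a::linorder \<Rightarrow> 'b::linorder"
  assumes "strict_antimono_on A f" and "a \<in> A" and "b \<in> A"
  shows "f b \<le> f a \<longleftrightarrow> a \<le> b"
proof (cases a b rule: linorder_cases)
  case less
  then have "f b < f a"
    using monotone_onD[OF assms] by simp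
  with less show ?thesis
    by (meson less_imp_le)
next
  case greater
  then have "f a < f b"
    using monotone_onD[OF assms(1,3,2)] by simp
  with greater show ?thesis
    by (meson leD)
qed simp

theorem lemma5p3:
  fixes e :: "nat \<Rightarrow> 'a::euclidean_space" and M L :: nat
    and l1 l2 :: "nat \<Rightarrow> int" and \<Delta> :: "nat \<Rightarrow> int \<Rightarrow> nat set" and \<beta> :: 'a
    and i j h m h' m'
  assumes e_nz: "\<forall>k\<in>{1..M}. e k \<noteq> 0"
    and e_orth: "\<forall>k\<in>{1..M}. \<forall>k'\<in>{1..M}. k \<noteq> k' \<longrightarrow> inner (e k) (e k') = 0"
    and e_span: "span (e ` {1..M}) = UNIV"
    and beta_nz: "\<beta> \<noteq> 0"
    and L_pos: "L \<ge> 1"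
    and l_le: "\<forall>h\<in>{1..L}. l1 h \<le> l2 h"
    and part_nonempty: "\<forall>p\<in>Jset L l1 l2. \<Delta> (fst p) (snd p) \<noteq> {}"
    and part_disj: "\<forall>p\<in>Jset L l1 l2. \<forall>q\<in>Jset L l1 l2. p \<noteq> q \<longrightarrow>
                      \<Delta> (fst p) (snd p) \<inter> \<Delta> (fst q) (snd q) = {}"
    and part_cover: "(\<Union>p\<in>Jset L l1 l2. \<Delta> (fst p) (snd p)) = {1..M}"
    and eps_range: "\<forall>h\<in>{1..L}. - 1/2 \<le> eps e \<Delta> l1 l2 h \<and> eps e \<Delta> l1 l2 h < 1/2"
    and eps_decr: "\<forall>h\<in>{1..L}. \<forall>h'\<in>{1..L}. h < h' \<longrightarrow> eps e \<Delta> l1 l2 h > eps e \<Delta> l1 l2 h'"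
    and beta_eq: "(1 / (norm \<beta>)\<^sup>2) *\<^sub>R \<beta> =
       (\<Sum>h=1..L. \<Sum>m=l1 h..l2 h. \<Sum>j\<in>\<Delta> h m.
          ((eps e \<Delta> l1 l2 h - of_int m) / (norm (e j))\<^sup>2) *\<^sub>R e j)"
    and hm: "(h, m) \<in> Jset L l1 l2" and i_in: "i \<in> \<Delta> h m"
    and hm': "(h', m') \<in> Jset L l1 l2" and j_in: "j \<in> \<Delta> h' m'"
  shows "(inner \<beta> (e i - e j) = (norm \<beta>)\<^sup>2 \<longleftrightarrow> h' = h \<and> m' = m + 1)
       \<and> (inner \<beta> (e i - e j) \<ge> (norm \<beta>)\<^sup>2 \<longleftrightarrow> m' \<ge> m + 2 \<or> (m' = m + 1 \<and> h' \<ge> h))"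
proof -
  define E where "E = eps e \<Delta> l1 l2"
  have inner_beta: "inner \<beta> (e k) = (norm \<beta>)\<^sup>2 * (E a - of_int b)"
    if "(a, b) \<in> Jset L l1 l2" "k \<in> \<Delta> a b" for a b k
    using inner_basis_vector_eq_block_coeff[OF e_nz e_orth part_disj part_cover beta_nz
        beta_eq that] by (simp add: E_def)
  have inner_diff: "inner \<beta> (e i - e j) = (norm \<beta>)\<^sup>2 * (E h - E h' + of_int (m' - m))"
    using inner_beta[OF hm i_in] inner_beta[OF hm' j_in] by (simp add: inner_diff_right algebra_simps)
  have h_in: "h \<in> {1..L}" "h' \<in> {1..L}"
    using hm hm' by (auto simp: Jset_def)
  then have E_range: "E h \<in> {-1/2..<1/2}" "E h' \<in> {-1/2..<1/2}"
    using eps_range by (auto simp: E_def)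
  have E_anti: "strict_antimono_on {1..L} E"
    using eps_decr by (auto simp: E_def intro: monotone_onI)
  have E_le_iff: "E h' \<le> E h \<longleftrightarrow> h \<le> h'"
    by (rule strict_antimono_on_le_iff[OF E_anti h_in])
  moreover have "E h \<le> E h' \<longleftrightarrow> h' \<le> h"
    by (rule strict_antimono_on_le_iff[OF E_anti h_in(2,1)])
  ultimately have E_eq_iff: "E h = E h' \<longleftrightarrow> h = h'"
    by (metis order.antisym order.refl)
  have norm_pos: "(norm \<beta>)\<^sup>2 > 0"
    using beta_nz by simp
  have "inner \<beta> (e i - e j) = (norm \<beta>)\<^sup>2 \<longleftrightarrow> m' - m = 1 \<and> h = h'"
    unfolding inner_diff half_interval_shift_eq_one_iff[OF E_range, symmetric] E_eq_iff[symmetric]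
    using norm_pos by simp
  moreover have "inner \<beta> (e i - e j) \<ge> (norm \<beta>)\<^sup>2 \<longleftrightarrow> m' - m \<ge> 2 \<or> (m' - m = 1 \<and> h \<le> h')"
    unfolding inner_diff half_interval_shift_ge_one_iff[OF E_range, symmetric] E_le_iff[symmetric]
    using norm_pos by simp
  ultimately show ?thesis
    by auto
qed

end
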